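(* Let $N\ge1$ and consider the annulus modelled as the strip $\mathbb R\times[0,1]$ modulo the translation $x\mapsto x+N$, with marked points $A_j=(j-1,0)$ on the bottom boundary and $B_j=(j-1,1)$ on the top boundary ($j\in\mathbb Z$, indices mod $N$). Let $\tau_N$ be the ideal triangulation whose interior edges are the vertical edges $A_jB_j$, labelled $2j-1$, and the diagonal edges $B_jA_{j+1}$, labelled $2j$ (labels taken mod $2N$), and let $f_1,\dots,f_{2N}>0$ be the Fock coordinates on the Teichmüller space of the annulus associated with $\tau_N$. Let $D^{1/N}$ be the mapping class which fixes each $A_j$ and maps $B_j\mapsto B_{j+1}$ (so that its $N$-th power is the Dehn twist fixing the boundary pointwise). Then $D^{1/N}$ acts on the Fock coordinates by \[ f'_{2j}=1/f_{2j-1},\qquad f'_{2j+1}=f_{2j}(1+f_{2j-1})(1+f_{2j+1}),\qquad j\in\mathbb Z \ (\text{indices mod }2N). \] Equivalently: if one sets $f_m=\chi_{m,0}$ for odd $m$ and $f_m=1/\chi_{m,-1}$ for even $m$, where $(\chi_{m,n})_{m+n\equiv1\ (2)}$ is a positive solution of the discrete Liouville equation $\chi_{m,n-1}\chi_{m,n+1}=(1+\chi_{m-1,n})(1+\chi_{m+1,n})$ on the sublattice $m+n\equiv 1\pmod 2$ with $\chi_{m+2N,n}=\chi_{m,n}$, then the transformed coordinates $f'_m$ correspond in the same way to the shifted solution $\chi'_{m,n}=\chi_{m-1,n+1}$. Thus the dynamical system defined by $D^{1/N}$ is the $2N$-periodic discrete Liouville equation with evolution step the light-cone translation $\chi_{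m,n}\mapsto\chi_{m-1,n+1}$.
   Context: Fock coordinates: positive real numbers attached to the interior edges of an ideal triangulation (no coordinates on boundary arcs). Under a flip of the diagonal $e$ of a quadrilateral with sides $a,b$ (top-left, top-right) and $c,d$ (bottom-left, bottom-right), the coordinates transform as $a'=a/(1+1/e)$, $d'=d/(1+1/e)$, $b'=b(1+e)$, $c'=c(1+e)$, $e'=1/e$, all others unchanged; for sides lying on the boundary there is nothing to transform. *)

theory Defs
  imports Complex_Main
begin

text \<open>A point is given by a developing map of the lifted marked points
into the real projective line (normalised so that the two fixed points of the hyperbolic
holonomy of the core curve are 0 and infinity, holonomy x \<mapsto> lam * x):
  A_j \<mapsto> a j (positive, increasing in j),  B_j \<mapsto> b j (negative, decreasing in j),
equivariant under the deck translation j \<mapsto> j + N.  (Points differing by a positive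
scaling represent the same hyperbolic structure; Fock coordinates are invariant.)
The increasing order on the real line is the positive (counterclockwise) boundary order.\<close>

definition teich_point :: "nat \<Rightarrow> real \<Rightarrow> (int \<Rightarrow> real) \<Rightarrow> (int \<Rightarrow> real) \<Rightarrow> bool" where
  "teich_point N lam a b \<longleftrightarrow> lam > 1 \<and>
     (\<forall>j. 0 < a j \<and> a j < a (j + 1) \<and> b j < 0 \<and> b (j + 1) < b j \<and>
          a (j + int N) = lam * a j \<and> b (j + int N) = lam * b j)"

text \<open>Fock (shear) coordinate of the diagonal x1 x3 of the ideal quadrilateral with
vertices x1, x2, x3, x4 in counterclockwise order.  With this convention the flip of
the diagonal e transforms coordinates as in the flip rule (diagonal drawn vertically:
the sides x2x3 (top-right) and x4x1 (bottom-left) get multiplied by 1+e, the other two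
divided by 1+1/e, and e becomes 1/e).\<close>

definition fock_cr :: "real \<Rightarrow> real \<Rightarrow> real \<Rightarrow> real \<Rightarrow> real" where
  "fock_cr x1 x2 x3 x4 = ((x3 - x2) * (x4 - x1)) / ((x2 - x1) * (x4 - x3))"

text \<open>Fock coordinates with respect to the triangulation tau_N:
edge 2j-1 = A_j B_j (quadrilateral A_j, A_(j+1), B_j, B_(j-1)),
edge 2j   = B_j A_(j+1) (quadrilateral B_j, A_j, A_(j+1), B_(j+1)).
Labels are integers; the result is automatically 2N-periodic.\<close>

definition fock :: "(int \<Rightarrow> real) \<Rightarrow> (int \<Rightarrow> real) \<Rightarrow> int \<Rightarrow> real" where
  "fock a b m =
     (if odd m then (let j = (m + 1) div 2 in fock_cr (a j) (a (j + 1)) (b j) (b (j - 1)))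
      else (let j = m div 2 in fock_cr (b j) (a j) (a (j + 1)) (b (j + 1))))"

text \<open>Push-forward of a Teichmueller point by D^(1/N), which fixes every A_j and sends
B_j to B_(j+1): the new developing map sends B_(j+1) to the old image of B_j.
The A-part and the holonomy are unchanged.\<close>

definition Dfrac_B :: "(int \<Rightarrow> real) \<Rightarrow> (int \<Rightarrow> real)" where
  "Dfrac_B b = (\<lambda>j. b (j - 1))"

definition liouville_sol :: "nat \<Rightarrow> (int \<Rightarrow> int \<Rightarrow> real) \<Rightarrow> bool" where
  "liouville_sol N chi \<longleftrightarrow>
     (\<forall>m n. odd (m + n) \<longrightarrow> chi m n > 0) \<and>
     (\<forall>m n. even (m + n) \<longrightarrow>
        chi m (n - 1) * chi m (n + 1) = (1 + chi (m - 1) n) * (1 + chi (m + 1) n)) \<and>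
     (\<forall>m n. odd (m + n) \<longrightarrow> chi (m + 2 * int N) n = chi m n)"

definition chi_to_fock :: "(int \<Rightarrow> int \<Rightarrow> real) \<Rightarrow> int \<Rightarrow> real" where
  "chi_to_fock chi m = (if odd m then chi m 0 else 1 / chi m (-1))"

end

theory Submission
  imports Defs
begin

text \<open>
  Each Fock coordinate of the triangulation tau_N is a cross-ratio of four
  marked points, and D^(1/N) only relabels the top points B_j.  After the relabelling,
  the even edge 2j is the quadrilateral of the odd edge 2j-1 read from a different
  vertex, so its coordinate is the reciprocal one; the odd edge 2j+1 has the
  quadrilateral A_(j+1), A_(j+2), B_j, B_(j-1), whose cross-ratio factors as a product of
  the three old coordinates of edges 2j-1, 2j, 2j+1 (an identity between cross-ratios
  valid for any six points in general position).  Finally, the resulting recurrence is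
  shown to be exactly one light-cone step of the discrete Liouville equation, by solving
  the Liouville equation at the lattice point (2j, 0) for chi (2j) 1.
\<close>

text \<open>Rotating the quadrilateral by one vertex inverts the shear coordinate.  In Isabelle
  this holds without any non-degeneracy assumption, since division by zero yields zero.\<close>

lemma fock_cr_rotate: "fock_cr x4 x1 x2 x3 = 1 / fock_cr x1 x2 x3 x4"
proof -
  have "(x2 - x1) * (x3 - x4) / ((x1 - x4) * (x3 - x2))
      = ((x2 - x1) * (x4 - x3)) / ((x4 - x1) * (x3 - x2))"
    by (simp add: minus_diff_eq[symmetric, of x4 x3] minus_diff_eq[symmetric, of x4 x1]
        del: minus_diff_eq)
  then show ?thesis unfolding fock_cr_def by (simp add: mult.commute)
qed

lemma one_plus_fock_cr:
  assumes "x2 \<noteq> x1" "x4 \<noteq> x3"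
  shows "1 + fock_cr x1 x2 x3 x4 = ((x3 - x1) * (x4 - x2)) / ((x2 - x1) * (x4 - x3))"
proof -
  have "(x2 - x1) * (x4 - x3) + (x3 - x2) * (x4 - x1) = (x3 - x1) * (x4 - x2)"
    by algebra
  then show ?thesis using assms unfolding fock_cr_def by (simp add: add_divide_eq_iff)
qed

lemma fock_cr_product:
  fixes a0 a1 a2 bm b0 b1 :: real
  assumes "a1 \<noteq> a0" "a2 \<noteq> a1" "b0 \<noteq> b1" "bm \<noteq> b0" "a0 \<noteq> b0" "a1 \<noteq> b1"
  shows "fock_cr a1 a2 b0 bm =
           fock_cr b0 a0 a1 b1 * (1 + fock_cr a0 a1 b0 bm) * (1 + fock_cr a1 a2 b1 b0)"
proof -
  have "fock_cr b0 a0 a1 b1 * (1 + fock_cr a0 a1 b0 bm) * (1 + fock_cr a1 a2 b1 b0)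
      = ((a1 - a0) * (b1 - b0)) / ((a0 - b0) * (b1 - a1))
        * (((b0 - a0) * (bm - a1)) / ((a1 - a0) * (bm - b0)))
        * (((b1 - a1) * (b0 - a2)) / ((a2 - a1) * (b0 - b1)))"
    unfolding one_plus_fock_cr[OF assms(1,4)] one_plus_fock_cr[OF assms(2,3)]
    by (simp add: fock_cr_def)
  also have "\<dots> = ((a1 - a0) / (a1 - a0)) * ((b1 - a1) / (b1 - a1))
        * ((b0 - a0) / (a0 - b0)) * ((b1 - b0) / (b0 - b1))
        * (((b0 - a2) * (bm - a1)) / ((a2 - a1) * (bm - b0)))"
    by (simp add: mult_ac)
  also have "\<dots> = ((b0 - a2) * (bm - a1)) / ((a2 - a1) * (bm - b0))"
  proof -
    have "(a1 - a0) / (a1 - a0) = 1" "(b1 - a1) / (b1 - a1) = 1"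
      using assms by simp_all
    moreover have "(b0 - a0) / (a0 - b0) = -1" "(b1 - b0) / (b0 - b1) = -1"
      using assms by (simp_all add: minus_diff_eq[symmetric, of a0 b0] minus_diff_eq[symmetric, of b0 b1]
          del: minus_diff_eq)
    ultimately show ?thesis by simp
  qed
  finally show ?thesis unfolding fock_cr_def by simp
qed

lemma fock_odd: "fock a b (2 * j - 1) = fock_cr (a j) (a (j + 1)) (b j) (b (j - 1))"
  by (simp add: fock_def)

lemma fock_odd_succ:
  "fock a b (2 * j + 1) = fock_cr (a (j + 1)) (a (j + 2)) (b (j + 1)) (b j)"
  by (simp add: fock_def add.assoc Let_def)

lemma fock_even: "fock a b (2 * j) = fock_cr (b j) (a j) (a (j + 1)) (b (j + 1))"
  by (simp add: fock_def)

lemma fock_Dfrac_even: "fock a (Dfrac_B b) (2 * j) = 1 / fock a b (2 * j - 1)"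
proof -
  have "fock a (Dfrac_B b) (2 * j) = fock_cr (b (j - 1)) (a j) (a (j + 1)) (b j)"
    by (simp add: fock_def Dfrac_B_def)
  also have "\<dots> = 1 / fock_cr (a j) (a (j + 1)) (b j) (b (j - 1))"
    by (rule fock_cr_rotate)
  finally show ?thesis by (simp only: fock_odd)
qed

text \<open>The odd coordinates after the twist, for a genuine point of Teichmueller space
  (where the marked points are distinct, so the cross-ratio identity applies).\<close>

lemma fock_Dfrac_odd:
  assumes "teich_point N lam a b"
  shows "fock a (Dfrac_B b) (2 * j + 1) =
           fock a b (2 * j) * (1 + fock a b (2 * j - 1)) * (1 + fock a b (2 * j + 1))"
proof -
  have mono: "\<And>i. 0 < a i \<and> a i < a (i + 1) \<and> b i < 0 \<and> b (i + 1) < b i"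
    using assms unfolding teich_point_def by blast
  have "fock a (Dfrac_B b) (2 * j + 1) = fock_cr (a (j + 1)) (a (j + 2)) (b j) (b (j - 1))"
    by (simp add: fock_def Dfrac_B_def add.assoc)
  also have "\<dots> = fock_cr (b j) (a j) (a (j + 1)) (b (j + 1))
        * (1 + fock_cr (a j) (a (j + 1)) (b j) (b (j - 1)))
        * (1 + fock_cr (a (j + 1)) (a (j + 2)) (b (j + 1)) (b j))"
    using mono[of j] mono[of "j - 1"] mono[of "j + 1"]
    by (intro fock_cr_product) (auto simp: add.assoc)
  finally show ?thesis by (simp add: fock_odd fock_odd_succ fock_even)
qed

lemma liouville_step:
  assumes "liouville_sol N chi" "even m"
  shows "chi m 1 = (1 + chi (m - 1) 0) * (1 + chi (m + 1) 0) / chi m (-1)"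
proof -
  have "odd (m + -1)" "even (m + 0)"
    using assms(2) by simp_all
  then have pos: "chi m (-1) > 0"
    and eq: "chi m (0 - 1) * chi m (0 + 1) = (1 + chi (m - 1) 0) * (1 + chi (m + 1) 0)"
    using assms(1) unfolding liouville_sol_def by blast+
  from pos eq show ?thesis by (simp add: field_simps)
qed

lemma recurrence_is_liouville_shift:
  fixes f f' :: "int \<Rightarrow> real"
  assumes even_rule: "\<And>j. f' (2 * j) = 1 / f (2 * j - 1)"
    and odd_rule: "\<And>j. f' (2 * j + 1) = f (2 * j) * (1 + f (2 * j - 1)) * (1 + f (2 * j + 1))"
    and sol: "liouville_sol N chi"
    and f_chi: "\<And>m. f m = chi_to_fock chi m"
  shows "f' m = chi_to_fock (\<lambda>m n. chi (m - 1) (n + 1)) m"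
proof (cases "even m")
  case True
  then obtain j where "m = 2 * j" by (auto elim: evenE)
  then show ?thesis using even_rule[of j] f_chi[of "2 * j - 1"] by (simp add: chi_to_fock_def)
next
  case False
  then obtain j where m: "m = 2 * j + 1" by (auto elim: oddE)
  have "f' m = (1 + chi (2 * j - 1) 0) * (1 + chi (2 * j + 1) 0) / chi (2 * j) (-1)"
    using m odd_rule[of j] f_chi[of "2 * j"] f_chi[of "2 * j - 1"] f_chi[of "2 * j + 1"]
    by (simp add: chi_to_fock_def)
  also have "\<dots> = chi (2 * j) 1"
    using liouville_step[OF sol, of "2 * j"] by simp
  finally show ?thesis using m by (simp add: chi_to_fock_def)
qed

theorem mainTheorem2:
  fixes N :: nat and lam :: real and a b :: "int \<Rightarrow> real"
  assumes "N \<ge> 1"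
    and "teich_point N lam a b"
  shows "(\<forall>j::int. fock a (Dfrac_B b) (2 * j) = 1 / fock a b (2 * j - 1) \<and>
            fock a (Dfrac_B b) (2 * j + 1) =
              fock a b (2 * j) * (1 + fock a b (2 * j - 1)) * (1 + fock a b (2 * j + 1)))
       \<and> (\<forall>chi. liouville_sol N chi \<and> (\<forall>m. fock a b m = chi_to_fock chi m) \<longrightarrow>
            (\<forall>m. fock a (Dfrac_B b) m = chi_to_fock (\<lambda>m n. chi (m - 1) (n + 1)) m))"
proof (intro conjI allI impI)
  fix j :: int
  show "fock a (Dfrac_B b) (2 * j) = 1 / fock a b (2 * j - 1)"
    by (rule fock_Dfrac_even)
  show "fock a (Dfrac_B b) (2 * j + 1) =
          fock a b (2 * j) * (1 + fock a b (2 * j - 1)) * (1 + fock a b (2 * j + 1))"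
    using assms(2) by (rule fock_Dfrac_odd)
next
  fix chi m
  assume "liouville_sol N chi \<and> (\<forall>m. fock a b m = chi_to_fock chi m)"
  then show "fock a (Dfrac_B b) m = chi_to_fock (\<lambda>m n. chi (m - 1) (n + 1)) m"
    using fock_Dfrac_even fock_Dfrac_odd[OF assms(2)]
    by (intro recurrence_is_liouville_shift[where f = "fock a b" and N = N]) auto
qed

end
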